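(* For $r\ge1$ let $H_r$ be the graph with vertex set $\{t_1,\ldots,t_{2r}\}$ and edge set $\{\{t_i,t_{r+i}\}: 1\le i\le r\}$. Then: (a) the graph $\mathcal{H}_r$ of $I_c(H_r)$ is a bipartite $r$-regular graph with $2^r$ vertices and $r2^{r-1}$ edges; (b) if $G$ is an unmixed bipartite graph without isolated vertices and $r=\alpha_0(G)$, then (after labeling the vertices suitably as $t_1,\dots,t_{2r}$) $G$ has the perfect matching $\{\{t_i,t_{r+i}\}\}_{i=1}^r$, and the graph $\mathcal{G}$ of $I_c(G)$ is a subgraph of $\mathcal{H}_r$. In particular $\mathcal{G}$ is bipartite.
   Context: A graph is unmixed if all its minimal vertex covers (inclusion-minimal vertex sets meeting every edge) have the same size; $\alpha_0$ is the minimum size of a vertex cover. For an unmixed graph with minimal vertex covers $C_1,\ldots,C_m$, the graph of its ideal of covers $I_c$ has vertex set $\{C_1,\ldots,C_m\}$ and $\{C_i,C_j\}$ ($i\neq j$) is an edge iff $|C_i\cup C_j|=|C_i|+1$. *)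

theory Defs
  imports Main
begin

definition simple_graph :: "'a set \<Rightarrow> 'a set set \<Rightarrow> bool" where
  "simple_graph V E \<longleftrightarrow> finite V \<and> (\<forall>e\<in>E. e \<subseteq> V \<and> card e = 2)"

definition vertex_cover :: "'a set \<Rightarrow> 'a set set \<Rightarrow> 'a set \<Rightarrow> bool" where
  "vertex_cover V E C \<longleftrightarrow> C \<subseteq> V \<and> (\<forall>e\<in>E. e \<inter> C \<noteq> {})"

definition minimal_vertex_cover :: "'a set \<Rightarrow> 'a set set \<Rightarrow> 'a set \<Rightarrow> bool" where
  "minimal_vertex_cover V E C \<longleftrightarrow> vertex_cover V E C \<and> (\<forall>D. D \<subset> C \<longrightarrow> \<not> vertex_cover V E D)"

definition unmixed :: "'a set \<Rightarrow> 'a set set \<Rightarrow> bool" where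
  "unmixed V E \<longleftrightarrow> (\<forall>C D. minimal_vertex_cover V E C \<longrightarrow> minimal_vertex_cover V E D \<longrightarrow> card C = card D)"

definition alpha0 :: "'a set \<Rightarrow> 'a set set \<Rightarrow> nat" where
  "alpha0 V E = Min (card ` {C. vertex_cover V E C})"

definition no_isolated_vertices :: "'a set \<Rightarrow> 'a set set \<Rightarrow> bool" where
  "no_isolated_vertices V E \<longleftrightarrow> (\<forall>v\<in>V. \<exists>e\<in>E. v \<in> e)"

definition bipartite :: "'a set \<Rightarrow> 'a set set \<Rightarrow> bool" where
  "bipartite V E \<longleftrightarrow> (\<exists>A B. A \<union> B = V \<and> A \<inter> B = {} \<and> (\<forall>e\<in>E. \<exists>a\<in>A. \<exists>b\<in>B. e = {a, b}))"

definition regular :: "'a set \<Rightarrow> 'a set set \<Rightarrow> nat \<Rightarrow> bool" where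
  "regular V E k \<longleftrightarrow> (\<forall>v\<in>V. card {e\<in>E. v \<in> e} = k)"

text \<open>The graph of the ideal of covers I_c: vertices are the minimal vertex covers,
  and C, D (distinct) are adjacent iff |C \<union> D| = |C| + 1.\<close>

definition cover_graph_vertices :: "'a set \<Rightarrow> 'a set set \<Rightarrow> 'a set set" where
  "cover_graph_vertices V E = {C. minimal_vertex_cover V E C}"

definition cover_graph_edges :: "'a set \<Rightarrow> 'a set set \<Rightarrow> 'a set set set" where
  "cover_graph_edges V E = {{C, D} | C D. minimal_vertex_cover V E C \<and> minimal_vertex_cover V E D
      \<and> C \<noteq> D \<and> card (C \<union> D) = card C + 1}"

definition H_vertices :: "nat \<Rightarrow> nat set" where
  "H_vertices r = {1..2*r}"

definition H_edges :: "nat \<Rightarrow> nat set set" where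
  "H_edges r = {{i, r + i} | i. 1 \<le> i \<and> i \<le> r}"

end

theory Submission
  imports Defs
begin

text \<open>
  The minimal vertex covers of H_r are the 2^r sets choosing one end of each edge {t_i, t_(r+i)}.
  Indexed by the set S of indices i for which t_i is chosen, two of them are adjacent in the graph
  of I_c exactly when their index sets differ in one element: the graph of I_c(H_r) is the
  r-cube, which is r-regular, bipartite by the parity of |S|, and has r 2^(r-1) edges by double
  counting.

  If G is unmixed and bipartite with sides A and B and has no isolated vertices, then A and B
  are minimal vertex covers, so |A| = |B| = alpha0(G) and no vertex cover is smaller than A. The
  vertex cover (A - S) \<union> N(S) thus gives Hall's condition |N(S)| \<ge> |S|, whence a perfect
  matching. Labelling A as t_1, ..., t_r and the partner of t_i as t_(r+i) maps every minimal
  vertex cover of G (it has r elements and meets every matching edge) to one of H_r, injectively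
  and preserving |C \<union> D|. So the graph of I_c(G) embeds into the r-cube and is bipartite.
\<close>

lemma bipartiteI:
  assumes "\<forall>e\<in>E. \<exists>a\<in>V. \<exists>b\<in>V. e = {a, b} \<and> P a \<and> \<not> P b"
  shows "bipartite V E"
  unfolding bipartite_def
proof (intro exI conjI)
  show "{v\<in>V. P v} \<union> {v\<in>V. \<not> P v} = V" "{v\<in>V. P v} \<inter> {v\<in>V. \<not> P v} = {}"
    by auto
  show "\<forall>e\<in>E. \<exists>a\<in>{v\<in>V. P v}. \<exists>b\<in>{v\<in>V. \<not> P v}. e = {a, b}"
    using assms by fastforce
qed

lemma simple_graph_edgeE:
  assumes "simple_graph V E" "e \<in> E"
  obtains a b where "a \<in> V" "b \<in> V" "a \<noteq> b" "e = {a, b}"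
  using assms unfolding simple_graph_def by (metis card_2_iff insert_subset)

lemma bipartite_if_homomorphism:
  assumes "bipartite V' E'" "simple_graph V E"
    and "\<forall>a b. {a, b} \<in> E \<longrightarrow> {f a, f b} \<in> E'"
  shows "bipartite V E"
proof -
  obtain A B where AB: "A \<union> B = V'" "A \<inter> B = {}" "\<forall>e\<in>E'. \<exists>a\<in>A. \<exists>b\<in>B. e = {a, b}"
    using assms(1) unfolding bipartite_def by blast
  have colouring: "\<exists>a\<in>V. \<exists>b\<in>V. e = {a, b} \<and> f a \<in> A \<and> f b \<notin> A" if e_E: "e \<in> E" for e
  proof -
    obtain a b where ab: "a \<in> V" "b \<in> V" "e = {a, b}"
      using simple_graph_edgeE[OF assms(2) e_E] by metis
    then obtain p q where pq: "p \<in> A" "q \<in> B" "{f a, f b} = {p, q}"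
      using AB(3) assms(3) e_E by metis
    then have "f a = p \<and> f b = q \<or> f a = q \<and> f b = p"
      by (simp add: doubleton_eq_iff)
    then show ?thesis
      using ab pq AB(2) by (metis disjoint_iff insert_commute)
  qed
  then show ?thesis
    by (intro bipartiteI ballI colouring)
qed

lemma regular_card_edges:
  assumes "simple_graph V E" "regular V E k"
  shows "k * card V = 2 * card E"
proof -
  have fin: "finite V" "finite E"
    using assms(1) finite_subset[of E "Pow V"] unfolding simple_graph_def by auto
  have "k * card V = (\<Sum>v\<in>V. card {e\<in>E. v \<in> e})"
    using assms(2) unfolding regular_def by simp
  also have "\<dots> = (\<Sum>v\<in>V. \<Sum>e\<in>E. if v \<in> e then 1 else 0)"
    using fin(2) sum.inter_filter[of E "\<lambda>_. 1::nat"] by simp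
  also have "\<dots> = (\<Sum>e\<in>E. \<Sum>v\<in>V. if v \<in> e then 1 else 0)"
    by (rule sum.swap)
  also have "\<dots> = (\<Sum>e\<in>E. card {v\<in>V. v \<in> e})"
    using fin(1) sum.inter_filter[of V "\<lambda>_. 1::nat"] by simp
  also have "\<dots> = (\<Sum>e\<in>E. card e)"
  proof (rule sum.cong[OF refl])
    fix e assume "e \<in> E"
    then have "{v\<in>V. v \<in> e} = e"
      using assms(1) unfolding simple_graph_def by blast
    then show "card {v\<in>V. v \<in> e} = card e" by simp
  qed
  also have "\<dots> = (\<Sum>e\<in>E. 2)"
    using assms(1) unfolding simple_graph_def by simp
  finally show ?thesis by simp
qed

section \<open>Vertex covers and the graph of the ideal of covers\<close>

lemma finite_vertex_cover:
  assumes "finite V" "vertex_cover V E C"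
  shows "finite C"
  using assms finite_subset unfolding vertex_cover_def by blast

lemma minimal_vertex_cover_subset:
  assumes "finite C" "vertex_cover V E C"
  shows "\<exists>C'\<subseteq>C. minimal_vertex_cover V E C'"
  using assms
proof (induction C rule: finite_psubset_induct)
  case (psubset C)
  show ?case
  proof (cases "minimal_vertex_cover V E C")
    case False
    then obtain D where "D \<subset> C" "vertex_cover V E D"
      using psubset.prems unfolding minimal_vertex_cover_def by blast
    moreover have "finite D"
      using \<open>D \<subset> C\<close> psubset.hyps finite_subset by blast
    ultimately obtain C' where "C' \<subseteq> D" "minimal_vertex_cover V E C'"
      using psubset.IH by blast
    then show ?thesis
      using \<open>D \<subset> C\<close> by blast
  qed blast
qed

lemma minimum_vertex_cover_minimal:
  assumes "finite C" "vertex_cover V E C" "\<forall>D. vertex_cover V E D \<longrightarrow> card C \<le> card D"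
  shows "minimal_vertex_cover V E C"
  unfolding minimal_vertex_cover_def
proof (intro conjI allI impI)
  fix D assume "D \<subset> C"
  with assms(1) have "card D < card C"
    by (rule psubset_card_mono)
  show "\<not> vertex_cover V E D"
  proof
    assume "vertex_cover V E D"
    then have "card C \<le> card D"
      using assms(3) by blast
    with \<open>card D < card C\<close> show False by simp
  qed
qed (rule assms(2))

lemma unmixed_card_le_vertex_cover:
  assumes "finite V" "unmixed V E" "minimal_vertex_cover V E C" "vertex_cover V E D"
  shows "card C \<le> card D"
proof -
  have "finite D"
    using assms(1,4) by (rule finite_vertex_cover)
  obtain D' where D': "D' \<subseteq> D" "minimal_vertex_cover V E D'"
    using minimal_vertex_cover_subset[OF \<open>finite D\<close> assms(4)] by blast
  have "card C = card D'"
    using assms(2) assms(3) D'(2) unfolding unmixed_def by blast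
  also have "\<dots> \<le> card D"
    using \<open>finite D\<close> D'(1) by (rule card_mono)
  finally show ?thesis .
qed

lemma alpha0_eq_card_if_unmixed:
  assumes "finite V" "unmixed V E" "minimal_vertex_cover V E C"
  shows "alpha0 V E = card C"
  unfolding alpha0_def
proof (rule Min_eqI)
  have "{D. vertex_cover V E D} \<subseteq> Pow V"
    unfolding vertex_cover_def by blast
  then show "finite (card ` {D. vertex_cover V E D})"
    using assms(1) by (meson finite_Pow_iff finite_imageI finite_subset)
  show "card C \<in> card ` {D. vertex_cover V E D}"
    using assms(3) unfolding minimal_vertex_cover_def by blast
next
  fix n assume "n \<in> card ` {D. vertex_cover V E D}"
  then show "card C \<le> n"
    using unmixed_card_le_vertex_cover[OF assms] by blast
qed

lemma bipartite_side_minimal_vertex_cover: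
  assumes "A \<subseteq> V" "A \<inter> B = {}" "\<forall>e\<in>E. \<exists>a\<in>A. \<exists>b\<in>B. e = {a, b}"
    and "no_isolated_vertices V E"
  shows "minimal_vertex_cover V E A"
  unfolding minimal_vertex_cover_def
proof (intro conjI allI impI)
  show "vertex_cover V E A"
    unfolding vertex_cover_def using assms(1,3) by blast
  fix D assume "D \<subset> A"
  then obtain x where x: "x \<in> A" "x \<notin> D" by blast
  then obtain e where "e \<in> E" "x \<in> e"
    using assms(1,4) unfolding no_isolated_vertices_def by blast
  then obtain a b where ab: "a \<in> A" "b \<in> B" "e = {a, b}"
    using assms(3) by blast
  have "x \<noteq> b"
    using x(1) ab(2) assms(2) by blast
  then have "e = {x, b}"
    using ab(3) \<open>x \<in> e\<close> by blast
  moreover have "b \<notin> D"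
    using ab(2) assms(2) \<open>D \<subset> A\<close> by blast
  ultimately have "e \<inter> D = {}"
    using x(2) by blast
  then show "\<not> vertex_cover V E D"
    unfolding vertex_cover_def using \<open>e \<in> E\<close> by blast
qed

lemma vertex_cover_image:
  assumes "f ` V \<subseteq> V'" "\<forall>e'\<in>E'. \<exists>e\<in>E. e' = f ` e" "vertex_cover V E C"
  shows "vertex_cover V' E' (f ` C)"
proof -
  have "f ` C \<subseteq> V'"
    using assms(1,3) unfolding vertex_cover_def by blast
  moreover have "e' \<inter> f ` C \<noteq> {}" if "e' \<in> E'" for e'
  proof -
    obtain e where "e \<in> E" "e' = f ` e"
      using assms(2) \<open>e' \<in> E'\<close> by blast
    moreover obtain x where "x \<in> e" "x \<in> C"
      using assms(3) \<open>e \<in> E\<close> unfolding vertex_cover_def by blast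
    ultimately show ?thesis by blast
  qed
  ultimately show ?thesis
    unfolding vertex_cover_def by blast
qed

lemma simple_graph_cover_graph:
  assumes "finite V"
  shows "simple_graph (cover_graph_vertices V E) (cover_graph_edges V E)"
proof -
  have "cover_graph_vertices V E \<subseteq> Pow V"
    unfolding cover_graph_vertices_def minimal_vertex_cover_def vertex_cover_def by blast
  then have "finite (cover_graph_vertices V E)"
    using assms by (meson finite_Pow_iff finite_subset)
  moreover have "e \<subseteq> cover_graph_vertices V E \<and> card e = 2"
    if e_edge: "e \<in> cover_graph_edges V E" for e
  proof -
    obtain C D where "e = {C, D}" "minimal_vertex_cover V E C" "minimal_vertex_cover V E D" "C \<noteq> D"
      using e_edge unfolding cover_graph_edges_def by (elim CollectE exE conjE) (rule that)
    then show ?thesis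
      unfolding cover_graph_vertices_def by simp
  qed
  ultimately show ?thesis
    unfolding simple_graph_def by blast
qed

lemma cover_graph_edge_image:
  assumes "inj_on f V"
    and "\<forall>C. minimal_vertex_cover V E C \<longrightarrow> minimal_vertex_cover V' E' (f ` C)"
    and "{C, D} \<in> cover_graph_edges V E"
  shows "{f ` C, f ` D} \<in> cover_graph_edges V' E'"
proof -
  have "\<exists>C' D'. {C, D} = {C', D'} \<and> minimal_vertex_cover V E C' \<and> minimal_vertex_cover V E D'
      \<and> C' \<noteq> D' \<and> card (C' \<union> D') = card C' + 1"
    using assms(3) unfolding cover_graph_edges_def by (rule CollectD)
  then obtain C' D' where CD: "{C, D} = {C', D'}" "minimal_vertex_cover V E C'"
    "minimal_vertex_cover V E D'" "C' \<noteq> D'" "card (C' \<union> D') = card C' + 1"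
    by (elim exE conjE) (rule that)
  have "C' \<union> D' \<subseteq> V"
    using CD(2,3) unfolding minimal_vertex_cover_def vertex_cover_def by blast
  with assms(1) have inj: "inj_on f (C' \<union> D')"
    by (rule inj_on_subset)
  then have "f ` C' \<noteq> f ` D'"
    using CD(4) by (simp add: inj_on_image_eq_iff)
  moreover have "card (f ` C' \<union> f ` D') = card (f ` C') + 1"
    using CD(5) card_image[OF inj] card_image[OF inj_on_subset[OF inj]]
    by (simp add: image_Un)
  moreover have "minimal_vertex_cover V' E' (f ` C')" "minimal_vertex_cover V' E' (f ` D')"
    using CD(2,3) assms(2) by blast+
  ultimately have "{f ` C', f ` D'} \<in> cover_graph_edges V' E'"
    unfolding cover_graph_edges_def by blast
  moreover have "{f ` C, f ` D} = {f ` C', f ` D'}"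
    using CD(1) by (auto simp: doubleton_eq_iff)
  ultimately show ?thesis
    by simp
qed

section \<open>Hall's marriage theorem\<close>

lemma Hall_condition_finite:
  assumes "\<forall>S\<subseteq>A. card S \<le> card (\<Union>(N ` S))" "finite T" "T \<subseteq> A"
  shows "finite (\<Union>(N ` T))"
proof -
  have "finite (N a)" if "a \<in> T" for a
  proof -
    have "card {a} \<le> card (\<Union>(N ` {a}))"
      using assms(1,3) that by blast
    then show ?thesis by (simp add: card_ge_0_finite)
  qed
  then show ?thesis using assms(2) by blast
qed

lemma Hall_condition_remove_tight:
  assumes Hall: "\<forall>S\<subseteq>A. card S \<le> card (\<Union>(N ` S))" and "finite A"
    and "S \<subseteq> A" and tight: "card (\<Union>(N ` S)) \<le> card S"
  shows "\<forall>T\<subseteq>A - S. card T \<le> card (\<Union>((\<lambda>a. N a - \<Union>(N ` S)) ` T))"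
proof (intro allI impI)
  fix T assume T: "T \<subseteq> A - S"
  have fin: "finite T" "finite S"
    using T \<open>S \<subseteq> A\<close> \<open>finite A\<close> by (auto intro: finite_subset)
  have fin_N: "finite (\<Union>(N ` (T \<union> S)))"
    using T \<open>S \<subseteq> A\<close> fin by (intro Hall_condition_finite[OF Hall]) auto
  have "\<Union>((\<lambda>a. N a - \<Union>(N ` S)) ` T) = \<Union>(N ` (T \<union> S)) - \<Union>(N ` S)"
    by blast
  then have "card (\<Union>((\<lambda>a. N a - \<Union>(N ` S)) ` T)) = card (\<Union>(N ` (T \<union> S))) - card (\<Union>(N ` S))"
    using fin_N by (simp add: card_Diff_subset finite_subset)
  moreover have "card (T \<union> S) = card T + card S"
    using T fin by (intro card_Un_disjoint) auto
  moreover have "card (T \<union> S) \<le> card (\<Union>(N ` (T \<union> S)))"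
    using Hall T \<open>S \<subseteq> A\<close> by (meson Diff_subset Un_least subset_trans)
  ultimately show "card T \<le> card (\<Union>((\<lambda>a. N a - \<Union>(N ` S)) ` T))"
    using tight by linarith
qed

lemma Hall_condition_remove_point:
  assumes "a \<in> A"
    and surplus: "\<forall>S. S \<noteq> {} \<longrightarrow> S \<subset> A \<longrightarrow> card S < card (\<Union>(N ` S))"
  shows "\<forall>T\<subseteq>A - {a}. card T \<le> card (\<Union>((\<lambda>x. N x - {b}) ` T))"
proof (intro allI impI)
  fix T assume T: "T \<subseteq> A - {a}"
  show "card T \<le> card (\<Union>((\<lambda>x. N x - {b}) ` T))"
  proof (cases "T = {}")
    case False
    with T \<open>a \<in> A\<close> surplus have "card T < card (\<Union>(N ` T))" by blast
    moreover have "\<Union>((\<lambda>x. N x - {b}) ` T) = \<Union>(N ` T) - {b}" by blast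
    ultimately show ?thesis by (auto simp: card_Diff_singleton_if)
  qed simp
qed

lemma matching_Un_avoiding:
  assumes "inj_on g1 S" "\<forall>a\<in>S. g1 a \<in> N a"
    and "inj_on g2 T" "\<forall>a\<in>T. g2 a \<in> N a - \<Union>(N ` S)"
  shows "\<exists>g. inj_on g (S \<union> T) \<and> (\<forall>a\<in>S \<union> T. g a \<in> N a)"
proof -
  define g where "g a = (if a \<in> S then g1 a else g2 a)" for a
  have "inj_on g (S \<union> (T - S))"
    unfolding inj_on_Un
  proof (intro conjI)
    show "inj_on g S"
      using assms(1) inj_on_cong[of S g g1] by (simp add: g_def)
    show "inj_on g (T - S)"
      using inj_on_subset[OF assms(3)] inj_on_cong[of "T - S" g g2] by (simp add: g_def)
    show "g ` (S - (T - S)) \<inter> g ` (T - S - S) = {}"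
      using assms(2,4) by (auto simp: g_def)
  qed
  moreover have "\<forall>a\<in>S \<union> T. g a \<in> N a"
    using assms(2,4) by (auto simp: g_def)
  ultimately show ?thesis
    by (metis Un_Diff_cancel)
qed

lemma matching_insert_avoiding:
  assumes "inj_on g A" "\<forall>x\<in>A. g x \<in> N x - {b}" "b \<in> N a"
  shows "\<exists>g. inj_on g (insert a A) \<and> (\<forall>x\<in>insert a A. g x \<in> N x)"
proof -
  have "inj_on (g(a := b)) (insert a A)"
    using assms(1,2) by (auto simp: inj_on_def)
  moreover have "\<forall>x\<in>insert a A. (g(a := b)) x \<in> N x"
    using assms(2,3) by simp
  ultimately show ?thesis by blast
qed

text \<open>Halmos--Vaughan: if some nonempty proper subset S of A is tight, match S and A - S
  separately (the latter avoiding the neighbours of S); otherwise every proper subset has surplus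
  and any single edge {a, b} can be put into the matching.\<close>

theorem Hall_marriage:
  assumes "finite A" and "\<forall>S\<subseteq>A. card S \<le> card (\<Union>(N ` S))"
  shows "\<exists>g. inj_on g A \<and> (\<forall>a\<in>A. g a \<in> N a)"
  using assms
proof (induction "card A" arbitrary: A N rule: less_induct)
  case less
  note fin = less.prems(1) and Hall = less.prems(2)
  consider (empty) "A = {}"
    | (tight) S where "S \<noteq> {}" "S \<subset> A" "card (\<Union>(N ` S)) \<le> card S"
    | (surplus) "A \<noteq> {}" "\<forall>S. S \<noteq> {} \<longrightarrow> S \<subset> A \<longrightarrow> card S < card (\<Union>(N ` S))"
    by (meson not_le)
  then show ?case
  proof cases
    case empty
    then show ?thesis by simp
  next
    case (tight S)
    let ?U = "\<Union>(N ` S)"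
    have S: "S \<subseteq> A" "finite S"
      using tight(2) fin finite_subset by auto
    have "card S < card A"
      using fin tight(2) by (rule psubset_card_mono)
    moreover have "\<forall>T\<subseteq>S. card T \<le> card (\<Union>(N ` T))"
      using Hall S(1) by auto
    ultimately obtain g1 where g1: "inj_on g1 S" "\<forall>a\<in>S. g1 a \<in> N a"
      using less.hyps[of S N] S(2) by blast
    have "card (A - S) < card A"
      using fin by (rule psubset_card_mono) (use tight(1) S(1) in blast)
    moreover have "\<forall>T\<subseteq>A - S. card T \<le> card (\<Union>((\<lambda>a. N a - ?U) ` T))"
      using Hall fin S(1) tight(3) by (rule Hall_condition_remove_tight)
    ultimately obtain g2 where g2: "inj_on g2 (A - S)" "\<forall>a\<in>A - S. g2 a \<in> N a - ?U"
      using less.hyps[of "A - S" "\<lambda>a. N a - ?U"] fin by blast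
    have "S \<union> (A - S) = A"
      using S(1) by blast
    then show ?thesis
      using matching_Un_avoiding[OF g1 g2] by simp
  next
    case surplus
    obtain a where a: "a \<in> A"
      using surplus(1) by blast
    have "card {a} \<le> card (\<Union>(N ` {a}))"
      using Hall a by blast
    then obtain b where b: "b \<in> N a"
      by fastforce
    have "card (A - {a}) < card A"
      using fin a by (rule card_Diff1_less)
    moreover have "\<forall>T\<subseteq>A - {a}. card T \<le> card (\<Union>((\<lambda>x. N x - {b}) ` T))"
      using a surplus(2) by (rule Hall_condition_remove_point)
    ultimately obtain g' where g': "inj_on g' (A - {a})" "\<forall>x\<in>A - {a}. g' x \<in> N x - {b}"
      using less.hyps[of "A - {a}" "\<lambda>x. N x - {b}"] fin by blast
    have "insert a (A - {a}) = A"
      using a by blast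
    then show ?thesis
      using matching_insert_avoiding[OF g' b] by simp
  qed
qed

section \<open>The graph of the ideal of covers of H_r\<close>

definition toggle :: "'a set \<Rightarrow> 'a \<Rightarrow> 'a set" where
  "toggle S i = (if i \<in> S then S - {i} else insert i S)"

lemma toggle_toggle [simp]: "toggle (toggle S i) i = S"
  unfolding toggle_def by auto

lemma toggle_neq: "toggle S i \<noteq> S"
  unfolding toggle_def by auto

lemma inj_toggle: "inj (toggle S)"
  by (rule injI) (auto simp: toggle_def split: if_splits)

lemma mem_toggle: "i \<in> S \<union> toggle S i"
  by (simp add: toggle_def)

lemma toggle_subset: "S \<subseteq> A \<Longrightarrow> i \<in> A \<Longrightarrow> toggle S i \<subseteq> A"
  unfolding toggle_def by auto

lemma even_card_toggle:
  assumes "finite S"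
  shows "even (card (toggle S i)) \<longleftrightarrow> odd (card S)"
proof (cases "i \<in> S")
  case True
  then have "card S = Suc (card (toggle S i))"
    using assms card_Suc_Diff1[OF assms True] by (simp add: toggle_def)
  then show ?thesis by simp
next
  case False
  then have "card (toggle S i) = Suc (card S)"
    using assms by (simp add: toggle_def)
  then show ?thesis by simp
qed

lemma card_toggle_Diff_add_card_Diff_toggle: "card (toggle S i - S) + card (S - toggle S i) = 1"
proof (cases "i \<in> S")
  case True
  then have "toggle S i - S = {}" "S - toggle S i = {i}"
    by (auto simp: toggle_def)
  then show ?thesis by (simp only:) simp
next
  case False
  then have "toggle S i - S = {i}" "S - toggle S i = {}"
    by (auto simp: toggle_def)
  then show ?thesis by (simp only:) simp
qed

lemma card_Diff_add_card_Diff_eq_1_iff: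
  assumes "finite S" "finite T"
  shows "card (T - S) + card (S - T) = 1 \<longleftrightarrow> (\<exists>i. T = toggle S i)"
proof
  assume card_1: "card (T - S) + card (S - T) = 1"
  have fin: "finite (T - S)" "finite (S - T)"
    using assms by simp_all
  show "\<exists>i. T = toggle S i"
  proof (cases "card (T - S) = 1")
    case True
    then obtain i where "T - S = {i}"
      by (auto simp: card_1_singleton_iff)
    moreover have "S - T = {}"
      using card_1 True fin by simp
    ultimately have "T = insert i S" "i \<notin> S"
      by blast+
    then have "T = toggle S i"
      by (simp add: toggle_def)
    then show ?thesis ..
  next
    case False
    then have "card (S - T) = 1" "card (T - S) = 0"
      using card_1 by linarith+
    then obtain i where "S - T = {i}" "T - S = {}"
      using fin by (auto simp: card_1_singleton_iff)
    then have "T = S - {i}" "i \<in> S"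
      by blast+
    then have "T = toggle S i"
      by (simp add: toggle_def)
    then show ?thesis ..
  qed
next
  assume "\<exists>i. T = toggle S i"
  then obtain i where "T = toggle S i" ..
  then show "card (T - S) + card (S - T) = 1"
    by (simp only: card_toggle_Diff_add_card_Diff_toggle)
qed

lemma finite_H_vertices [simp]: "finite (H_vertices r)"
  by (simp add: H_vertices_def)

definition H_cover :: "nat \<Rightarrow> nat set \<Rightarrow> nat set" where
  "H_cover r S = S \<union> (+) r ` ({1..r} - S)"

lemma vertex_cover_H_iff:
  "vertex_cover (H_vertices r) (H_edges r) C \<longleftrightarrow>
     C \<subseteq> {1..2*r} \<and> (\<forall>i\<in>{1..r}. i \<in> C \<or> r + i \<in> C)"
proof -
  have "H_edges r = (\<lambda>i. {i, r + i}) ` {1..r}"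
    unfolding H_edges_def by auto
  then show ?thesis
    unfolding vertex_cover_def H_vertices_def by auto
qed

lemma H_cover_subset_vertex_cover:
  assumes "vertex_cover (H_vertices r) (H_edges r) C"
  shows "H_cover r (C \<inter> {1..r}) \<subseteq> C"
  using assms unfolding vertex_cover_H_iff H_cover_def by auto

lemma vertex_cover_H_cover:
  assumes "S \<subseteq> {1..r}"
  shows "vertex_cover (H_vertices r) (H_edges r) (H_cover r S)"
  using assms unfolding vertex_cover_H_iff H_cover_def by auto

lemma H_cover_Int_lower:
  assumes "S \<subseteq> {1..r}"
  shows "H_cover r S \<inter> {1..r} = S"
  using assms unfolding H_cover_def by auto

lemma card_H_cover:
  assumes "S \<subseteq> {1..r}"
  shows "card (H_cover r S) = r"
proof -
  have "finite S"
    using assms finite_subset by blast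
  have "card (H_cover r S) = card S + card ((+) r ` ({1..r} - S))"
    unfolding H_cover_def using assms \<open>finite S\<close> by (intro card_Un_disjoint) auto
  also have "\<dots> = card S + (r - card S)"
    using assms \<open>finite S\<close> by (simp add: card_image card_Diff_subset)
  also have "\<dots> = r"
    using card_mono[OF _ assms] by simp
  finally show ?thesis .
qed

lemma card_vertex_cover_H_ge:
  assumes "vertex_cover (H_vertices r) (H_edges r) C"
  shows "r \<le> card C"
proof -
  have "finite C"
    using finite_H_vertices assms by (rule finite_vertex_cover)
  then have "card (H_cover r (C \<inter> {1..r})) \<le> card C"
    using H_cover_subset_vertex_cover[OF assms] by (rule card_mono)
  then show ?thesis
    by (simp add: card_H_cover)
qed

lemma minimal_vertex_cover_H_iff_card:
  "minimal_vertex_cover (H_vertices r) (H_edges r) C \<longleftrightarrow>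
     vertex_cover (H_vertices r) (H_edges r) C \<and> card C = r"
proof
  assume min: "minimal_vertex_cover (H_vertices r) (H_edges r) C"
  then have vc: "vertex_cover (H_vertices r) (H_edges r) C"
    unfolding minimal_vertex_cover_def by blast
  moreover have "H_cover r (C \<inter> {1..r}) = C"
    using min H_cover_subset_vertex_cover[OF vc] vertex_cover_H_cover[of "C \<inter> {1..r}" r]
    unfolding minimal_vertex_cover_def by blast
  ultimately show "vertex_cover (H_vertices r) (H_edges r) C \<and> card C = r"
    by (metis card_H_cover inf_le2)
next
  assume "vertex_cover (H_vertices r) (H_edges r) C \<and> card C = r"
  moreover from this have "finite C"
    by (blast intro: finite_vertex_cover[OF finite_H_vertices])
  ultimately show "minimal_vertex_cover (H_vertices r) (H_edges r) C"
    using card_vertex_cover_H_ge by (intro minimum_vertex_cover_minimal) auto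
qed

lemma minimal_vertex_cover_H_iff:
  "minimal_vertex_cover (H_vertices r) (H_edges r) C \<longleftrightarrow> (\<exists>S\<subseteq>{1..r}. C = H_cover r S)"
proof
  assume min: "minimal_vertex_cover (H_vertices r) (H_edges r) C"
  then have vc: "vertex_cover (H_vertices r) (H_edges r) C" and "card C = r"
    unfolding minimal_vertex_cover_H_iff_card by auto
  moreover have "finite C"
    using finite_H_vertices vc by (rule finite_vertex_cover)
  ultimately have "H_cover r (C \<inter> {1..r}) = C"
    using H_cover_subset_vertex_cover[OF vc] by (intro card_subset_eq) (auto simp: card_H_cover)
  then show "\<exists>S\<subseteq>{1..r}. C = H_cover r S"
    by (metis inf_le2)
next
  assume "\<exists>S\<subseteq>{1..r}. C = H_cover r S"
  then show "minimal_vertex_cover (H_vertices r) (H_edges r) C"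
    unfolding minimal_vertex_cover_H_iff_card using vertex_cover_H_cover card_H_cover by blast
qed

lemma H_cover_eq_iff:
  assumes "S \<subseteq> {1..r}" "T \<subseteq> {1..r}"
  shows "H_cover r S = H_cover r T \<longleftrightarrow> S = T"
  using H_cover_Int_lower[OF assms(1)] H_cover_Int_lower[OF assms(2)] by metis

lemma add_notin_subset_atLeastAtMost:
  fixes r i :: nat
  assumes "S \<subseteq> {1..r}" "0 < i"
  shows "r + i \<notin> S"
proof
  assume "r + i \<in> S"
  then have "r + i \<le> r"
    using assms(1) by auto
  with assms(2) show False by simp
qed

lemma H_cover_Diff:
  assumes "S \<subseteq> {1..r}" "T \<subseteq> {1..r}"
  shows "H_cover r T - H_cover r S = (T - S) \<union> (+) r ` (S - T)"
  using assms add_notin_subset_atLeastAtMost[OF assms(1)] add_notin_subset_atLeastAtMost[OF assms(2)]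
  unfolding H_cover_def by (auto simp: subset_iff)

lemma card_H_cover_Un:
  assumes "S \<subseteq> {1..r}" "T \<subseteq> {1..r}"
  shows "card (H_cover r S \<union> H_cover r T) = r + (card (T - S) + card (S - T))"
proof -
  have fin: "finite S" "finite T"
    using assms finite_subset by auto
  then have "finite (H_cover r S)" "finite (H_cover r T)"
    unfolding H_cover_def by simp_all
  then have "card (H_cover r S \<union> H_cover r T) = card (H_cover r S) + card (H_cover r T - H_cover r S)"
    by (metis Un_Diff_cancel card_Un_disjoint Diff_disjoint finite_Diff)
  also have "card (H_cover r T - H_cover r S) = card (T - S) + card ((+) r ` (S - T))"
    unfolding H_cover_Diff[OF assms] using fin assms add_notin_subset_atLeastAtMost[OF assms(2)]
    by (intro card_Un_disjoint) (auto simp: subset_iff)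
  finally show ?thesis
    using assms by (simp add: card_H_cover card_image)
qed

lemma cover_graph_vertices_H:
  "cover_graph_vertices (H_vertices r) (H_edges r) = H_cover r ` Pow {1..r}"
  unfolding cover_graph_vertices_def minimal_vertex_cover_H_iff image_def by auto

lemma card_cover_graph_vertices_H:
  "card (cover_graph_vertices (H_vertices r) (H_edges r)) = 2 ^ r"
proof -
  have "inj_on (H_cover r) (Pow {1..r})"
    by (rule inj_onI) (simp add: H_cover_eq_iff)
  then show ?thesis
    unfolding cover_graph_vertices_H by (simp add: card_image card_Pow)
qed

lemma H_cover_adjacent_iff:
  assumes "S \<subseteq> {1..r}" "T \<subseteq> {1..r}"
  shows "H_cover r S \<noteq> H_cover r T \<and> card (H_cover r S \<union> H_cover r T) = card (H_cover r S) + 1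
    \<longleftrightarrow> (\<exists>i. T = toggle S i)"
proof -
  have "finite S" "finite T"
    using assms finite_subset by auto
  then have "card (H_cover r S \<union> H_cover r T) = card (H_cover r S) + 1 \<longleftrightarrow> (\<exists>i. T = toggle S i)"
    using assms card_Diff_add_card_Diff_eq_1_iff[of S T] by (simp add: card_H_cover_Un card_H_cover)
  moreover have "S \<noteq> toggle S i" for i
    using toggle_neq by metis
  ultimately show ?thesis
    using H_cover_eq_iff[OF assms] by blast
qed

lemma cover_graph_edges_H_iff:
  "e \<in> cover_graph_edges (H_vertices r) (H_edges r) \<longleftrightarrow>
     (\<exists>S\<subseteq>{1..r}. \<exists>i\<in>{1..r}. e = {H_cover r S, H_cover r (toggle S i)})"
proof
  assume "e \<in> cover_graph_edges (H_vertices r) (H_edges r)"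
  then obtain C D where e: "e = {C, D}" "minimal_vertex_cover (H_vertices r) (H_edges r) C"
    "minimal_vertex_cover (H_vertices r) (H_edges r) D" "C \<noteq> D" "card (C \<union> D) = card C + 1"
    unfolding cover_graph_edges_def by (elim CollectE exE conjE) (rule that)
  obtain S T where ST: "S \<subseteq> {1..r}" "C = H_cover r S" "T \<subseteq> {1..r}" "D = H_cover r T"
    using e(2,3) unfolding minimal_vertex_cover_H_iff by blast
  then obtain i where "T = toggle S i"
    using e(4,5) H_cover_adjacent_iff by blast
  moreover have "i \<in> {1..r}"
    using mem_toggle[of i S] ST(1,3) calculation by blast
  ultimately show "\<exists>S\<subseteq>{1..r}. \<exists>i\<in>{1..r}. e = {H_cover r S, H_cover r (toggle S i)}"
    using e(1) ST by blast
next
  assume "\<exists>S\<subseteq>{1..r}. \<exists>i\<in>{1..r}. e = {H_cover r S, H_cover r (toggle S i)}"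
  then obtain S i where S: "S \<subseteq> {1..r}" "i \<in> {1..r}" and e: "e = {H_cover r S, H_cover r (toggle S i)}"
    by blast
  from S have "toggle S i \<subseteq> {1..r}"
    by (rule toggle_subset)
  then have "minimal_vertex_cover (H_vertices r) (H_edges r) (H_cover r S)"
    "minimal_vertex_cover (H_vertices r) (H_edges r) (H_cover r (toggle S i))"
    "H_cover r S \<noteq> H_cover r (toggle S i)"
    "card (H_cover r S \<union> H_cover r (toggle S i)) = card (H_cover r S) + 1"
    using S H_cover_adjacent_iff[OF S(1)] unfolding minimal_vertex_cover_H_iff by blast+
  then show "e \<in> cover_graph_edges (H_vertices r) (H_edges r)"
    unfolding cover_graph_edges_def e by blast
qed

lemma cover_graph_edges_H_at:
  assumes "S \<subseteq> {1..r}"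
  shows "{e \<in> cover_graph_edges (H_vertices r) (H_edges r). H_cover r S \<in> e}
    = (\<lambda>i. {H_cover r S, H_cover r (toggle S i)}) ` {1..r}"
proof (intro equalityI subsetI)
  fix e assume "e \<in> {e \<in> cover_graph_edges (H_vertices r) (H_edges r). H_cover r S \<in> e}"
  then obtain S' i where S': "S' \<subseteq> {1..r}" "i \<in> {1..r}"
    and e: "e = {H_cover r S', H_cover r (toggle S' i)}" "H_cover r S \<in> e"
    unfolding cover_graph_edges_H_iff by blast
  have "toggle S' i \<subseteq> {1..r}"
    using S' by (rule toggle_subset)
  then have "S = S' \<or> S = toggle S' i"
    using e assms S'(1) H_cover_eq_iff by blast
  then have "e = {H_cover r S, H_cover r (toggle S i)}"
  proof
    assume "S = toggle S' i"
    then have "S' = toggle S i" by simp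
    then show ?thesis
      using e(1) \<open>S = toggle S' i\<close> by (simp add: insert_commute)
  qed (use e(1) in simp)
  then show "e \<in> (\<lambda>i. {H_cover r S, H_cover r (toggle S i)}) ` {1..r}"
    using S'(2) by blast
next
  fix e assume "e \<in> (\<lambda>i. {H_cover r S, H_cover r (toggle S i)}) ` {1..r}"
  then show "e \<in> {e \<in> cover_graph_edges (H_vertices r) (H_edges r). H_cover r S \<in> e}"
    using assms unfolding cover_graph_edges_H_iff by blast
qed

lemma regular_cover_graph_H:
  "regular (cover_graph_vertices (H_vertices r) (H_edges r)) (cover_graph_edges (H_vertices r) (H_edges r)) r"
  unfolding regular_def cover_graph_vertices_H
proof (intro ballI)
  fix C assume "C \<in> H_cover r ` Pow {1..r}"
  then obtain S where S: "S \<subseteq> {1..r}" "C = H_cover r S" by blast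
  have "inj_on (\<lambda>i. {H_cover r S, H_cover r (toggle S i)}) {1..r}"
  proof (rule inj_onI)
    fix i j assume ij: "i \<in> {1..r}" "j \<in> {1..r}"
      and "{H_cover r S, H_cover r (toggle S i)} = {H_cover r S, H_cover r (toggle S j)}"
    then have "H_cover r (toggle S i) = H_cover r (toggle S j)"
      by (metis doubleton_eq_iff)
    then have "toggle S i = toggle S j"
      using H_cover_eq_iff toggle_subset[OF S(1)] ij by blast
    then show "i = j"
      by (rule injD[OF inj_toggle])
  qed
  then show "card {e \<in> cover_graph_edges (H_vertices r) (H_edges r). C \<in> e} = r"
    unfolding S(2) cover_graph_edges_H_at[OF S(1)] by (simp add: card_image)
qed

lemma bipartite_cover_graph_H:
  "bipartite (cover_graph_vertices (H_vertices r) (H_edges r)) (cover_graph_edges (H_vertices r) (H_edges r))"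
proof (rule bipartiteI[where P = "\<lambda>C. even (card (C \<inter> {1..r}))"], rule ballI)
  fix e assume "e \<in> cover_graph_edges (H_vertices r) (H_edges r)"
  then obtain S i where S: "S \<subseteq> {1..r}" "i \<in> {1..r}"
    and e: "e = {H_cover r S, H_cover r (toggle S i)}"
    unfolding cover_graph_edges_H_iff by blast
  have T: "toggle S i \<subseteq> {1..r}"
    using S by (rule toggle_subset)
  have parity: "even (card (H_cover r (toggle S i) \<inter> {1..r})) \<longleftrightarrow> \<not> even (card (H_cover r S \<inter> {1..r}))"
    using H_cover_Int_lower[OF S(1)] H_cover_Int_lower[OF T] even_card_toggle finite_subset[OF S(1)]
    by simp
  have vertices: "H_cover r S \<in> cover_graph_vertices (H_vertices r) (H_edges r)"
    "H_cover r (toggle S i) \<in> cover_graph_vertices (H_vertices r) (H_edges r)"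
    unfolding cover_graph_vertices_H using S(1) T by blast+
  show "\<exists>a\<in>cover_graph_vertices (H_vertices r) (H_edges r).
      \<exists>b\<in>cover_graph_vertices (H_vertices r) (H_edges r).
        e = {a, b} \<and> even (card (a \<inter> {1..r})) \<and> \<not> even (card (b \<inter> {1..r}))"
  proof (cases "even (card (H_cover r S \<inter> {1..r}))")
    case True
    then show ?thesis
      using vertices parity e by blast
  next
    case False
    moreover have "e = {H_cover r (toggle S i), H_cover r S}"
      using e by (simp add: insert_commute)
    ultimately show ?thesis
      using vertices parity by blast
  qed
qed

lemma card_cover_graph_edges_H:
  assumes "r \<ge> 1"
  shows "card (cover_graph_edges (H_vertices r) (H_edges r)) = r * 2 ^ (r - 1)"
proof -
  have "simple_graph (cover_graph_vertices (H_vertices r) (H_edges r)) (cover_graph_edges (H_vertices r) (H_edges r))"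
    by (rule simple_graph_cover_graph) simp
  then have "r * 2 ^ r = 2 * card (cover_graph_edges (H_vertices r) (H_edges r))"
    using regular_card_edges regular_cover_graph_H card_cover_graph_vertices_H by metis
  moreover have "(2::nat) ^ r = 2 * 2 ^ (r - 1)"
    using assms by (metis power_Suc Suc_diff_1 le_numeral_extra(2) less_le_trans zero_less_one)
  ultimately show ?thesis by simp
qed

section \<open>Unmixed bipartite graphs\<close>

lemma unmixed_bipartite_Hall_condition:
  assumes "finite V" "unmixed V E" "minimal_vertex_cover V E A"
    and "A \<union> B = V" "\<forall>e\<in>E. \<exists>a\<in>A. \<exists>b\<in>B. e = {a, b}"
  shows "\<forall>S\<subseteq>A. card S \<le> card (\<Union>a\<in>S. {b\<in>B. {a, b} \<in> E})"
proof (intro allI impI)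
  fix S assume "S \<subseteq> A"
  let ?N = "\<Union>a\<in>S. {b\<in>B. {a, b} \<in> E}"
  have fin: "finite A" "finite S"
    using assms(1,4) \<open>S \<subseteq> A\<close> finite_subset by auto
  have cover: "vertex_cover V E ((A - S) \<union> ?N)"
    unfolding vertex_cover_def
  proof (intro conjI ballI)
    show "(A - S) \<union> ?N \<subseteq> V"
      using assms(4) by blast
  next
    fix e assume "e \<in> E"
    then obtain a b where ab: "a \<in> A" "b \<in> B" "e = {a, b}"
      using assms(5) by blast
    then have "a \<in> A - S \<or> b \<in> ?N"
      using \<open>e \<in> E\<close> by blast
    then show "e \<inter> ((A - S) \<union> ?N) \<noteq> {}"
      using ab(3) by blast
  qed
  have "card A \<le> card ((A - S) \<union> ?N)"
    using assms(1-3) cover by (rule unmixed_card_le_vertex_cover)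
  also have "\<dots> \<le> card (A - S) + card ?N"
    by (rule card_Un_le)
  also have "card (A - S) = card A - card S"
    using fin(2) \<open>S \<subseteq> A\<close> by (rule card_Diff_subset)
  finally show "card S \<le> card ?N"
    using card_mono[OF fin(1) \<open>S \<subseteq> A\<close>] by linarith
qed

lemma unmixed_bipartite_perfect_matching:
  assumes "finite V" "unmixed V E" "no_isolated_vertices V E"
    and "A \<union> B = V" "A \<inter> B = {}" "\<forall>e\<in>E. \<exists>a\<in>A. \<exists>b\<in>B. e = {a, b}"
  shows "\<exists>g. bij_betw g A B \<and> (\<forall>a\<in>A. {a, g a} \<in> E)"
proof -
  have min_A: "minimal_vertex_cover V E A"
    using assms(4-6) by (intro bipartite_side_minimal_vertex_cover[OF _ _ _ assms(3)]) auto
  have "\<forall>e\<in>E. \<exists>b\<in>B. \<exists>a\<in>A. e = {b, a}"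
    using assms(6) by (metis insert_commute)
  then have "minimal_vertex_cover V E B"
    using assms(4,5) by (intro bipartite_side_minimal_vertex_cover[OF _ _ _ assms(3)]) auto
  then have card_B: "card B = card A"
    using min_A assms(2) unfolding unmixed_def by blast
  have fin: "finite A" "finite B"
    using assms(1,4) finite_subset by auto
  obtain g where g: "inj_on g A" "\<forall>a\<in>A. g a \<in> {b\<in>B. {a, b} \<in> E}"
    using Hall_marriage[OF fin(1) unmixed_bipartite_Hall_condition[OF assms(1,2) min_A assms(4,6)]]
    by blast
  have "g ` A \<subseteq> B"
    using g(2) by blast
  moreover have "card (g ` A) = card B"
    using card_B g(1) by (simp add: card_image)
  ultimately have "g ` A = B"
    by (rule card_subset_eq[OF fin(2)])
  then show ?thesis
    using g unfolding bij_betw_def by blast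
qed

lemma matching_labelling:
  fixes r :: nat
  assumes "bij_betw g A B" "A \<inter> B = {}" "finite A" "card A = r"
  shows "\<exists>f. bij_betw f (A \<union> B) {1..2*r} \<and> bij_betw f A {1..r} \<and> (\<forall>a\<in>A. f (g a) = r + f a)"
proof -
  obtain h where h: "bij_betw h A {1..r}"
    using ex_bij_betw_nat_finite_1[OF assms(3)] assms(4) bij_betw_inv_into by blast
  define f where "f v = (if v \<in> A then h v else r + h (inv_into A g v))" for v
  have f_A: "bij_betw f A {1..r}"
    using h by (rule bij_betw_cong[THEN iffD1, rotated]) (simp add: f_def)
  have "bij_betw ((+) r) {1..r} {r+1..2*r}"
    unfolding bij_betw_def by (simp add: inj_on_def)
  then have "bij_betw ((+) r \<circ> h \<circ> inv_into A g) B {r+1..2*r}"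
    using bij_betw_inv_into[OF assms(1)] h by (metis bij_betw_trans)
  moreover have "f v = ((+) r \<circ> h \<circ> inv_into A g) v" if "v \<in> B" for v
    using assms(2) that by (auto simp: f_def)
  ultimately have f_B: "bij_betw f B {r+1..2*r}"
    using bij_betw_cong[of B f "(+) r \<circ> h \<circ> inv_into A g"] by blast
  have "{1..r} \<union> {r+1..2*r} = {1..2*r}"
    by auto
  then have "bij_betw f (A \<union> B) {1..2*r}"
    using bij_betw_combine[OF f_A f_B] by simp
  moreover have "f (g a) = r + f a" if "a \<in> A" for a
  proof -
    have "g a \<in> B" "g a \<notin> A"
      using assms(1,2) that by (auto simp: bij_betw_def)
    then show ?thesis
      using that bij_betw_inv_into_left[OF assms(1) that] by (simp add: f_def)
  qed
  ultimately show ?thesis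
    using f_A by blast
qed

lemma minimal_vertex_cover_image_H:
  assumes "finite V" "unmixed V E" "minimal_vertex_cover V E A" "card A = r"
    and "inj_on f V" "f ` V \<subseteq> H_vertices r"
    and "\<forall>i. 1 \<le> i \<and> i \<le> r \<longrightarrow> (\<exists>a\<in>V. \<exists>b\<in>V. f a = i \<and> f b = r + i \<and> {a, b} \<in> E)"
    and "minimal_vertex_cover V E C"
  shows "minimal_vertex_cover (H_vertices r) (H_edges r) (f ` C)"
proof -
  have "vertex_cover V E C"
    using assms(8) unfolding minimal_vertex_cover_def by blast
  moreover have "\<forall>e'\<in>H_edges r. \<exists>e\<in>E. e' = f ` e"
  proof
    fix e' assume "e' \<in> H_edges r"
    then obtain i where "e' = {i, r + i}" "1 \<le> i \<and> i \<le> r"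
      unfolding H_edges_def by auto
    then obtain a b where "e' = {f a, f b}" "{a, b} \<in> E"
      using assms(7) by metis
    then show "\<exists>e\<in>E. e' = f ` e"
      by (intro bexI[of _ "{a, b}"]) auto
  qed
  ultimately have "vertex_cover (H_vertices r) (H_edges r) (f ` C)"
    using assms(6) by (intro vertex_cover_image)
  moreover have "C \<subseteq> V"
    using \<open>vertex_cover V E C\<close> unfolding vertex_cover_def by blast
  then have "card (f ` C) = card C"
    by (rule card_image[OF inj_on_subset[OF assms(5)]])
  moreover have "card C = card A"
    using assms(2,3,8) unfolding unmixed_def by blast
  ultimately show ?thesis
    unfolding minimal_vertex_cover_H_iff_card using assms(4) by simp
qed

lemma unmixed_bipartite_cover_graph_embedding:
  assumes "simple_graph V E" "unmixed V E" "bipartite V E" "no_isolated_vertices V E"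
    and "r = alpha0 V E"
  shows "\<exists>f. bij_betw f V (H_vertices r)
    \<and> (\<forall>i. 1 \<le> i \<and> i \<le> r \<longrightarrow> (\<exists>a\<in>V. \<exists>b\<in>V. f a = i \<and> f b = r + i \<and> {a, b} \<in> E))
    \<and> (\<forall>C\<in>cover_graph_vertices V E. f ` C \<in> cover_graph_vertices (H_vertices r) (H_edges r))
    \<and> (\<forall>C D. {C, D} \<in> cover_graph_edges V E \<longrightarrow>
          {f ` C, f ` D} \<in> cover_graph_edges (H_vertices r) (H_edges r))"
proof -
  obtain A B where AB: "A \<union> B = V" "A \<inter> B = {}" "\<forall>e\<in>E. \<exists>a\<in>A. \<exists>b\<in>B. e = {a, b}"
    using assms(3) unfolding bipartite_def by blast
  have fin: "finite V" "finite A"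
    using assms(1) AB(1) finite_subset unfolding simple_graph_def by auto
  obtain g where g: "bij_betw g A B" "\<forall>a\<in>A. {a, g a} \<in> E"
    using unmixed_bipartite_perfect_matching[OF fin(1) assms(2,4) AB] by blast
  have min_A: "minimal_vertex_cover V E A"
    using AB by (intro bipartite_side_minimal_vertex_cover[OF _ _ _ assms(4)]) auto
  then have card_A: "card A = r"
    using alpha0_eq_card_if_unmixed[OF fin(1) assms(2)] assms(5) by simp
  obtain f where f: "bij_betw f V (H_vertices r)" "bij_betw f A {1..r}" "\<forall>a\<in>A. f (g a) = r + f a"
    using matching_labelling[OF g(1) AB(2) fin(2) card_A] AB(1) unfolding H_vertices_def by blast
  have inj: "inj_on f V"
    using f(1) by (rule bij_betw_imp_inj_on)
  have pairs: "\<forall>i. 1 \<le> i \<and> i \<le> r \<longrightarrow> (\<exists>a\<in>V. \<exists>b\<in>V. f a = i \<and> f b = r + i \<and> {a, b} \<in> E)"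
  proof (intro allI impI)
    fix i assume "1 \<le> i \<and> i \<le> r"
    then have "i \<in> f ` A"
      using f(2) by (simp add: bij_betw_def)
    then obtain a where "a \<in> A" "f a = i"
      by blast
    moreover have "g a \<in> B"
      using g(1) \<open>a \<in> A\<close> by (simp add: bij_betw_apply)
    ultimately show "\<exists>a\<in>V. \<exists>b\<in>V. f a = i \<and> f b = r + i \<and> {a, b} \<in> E"
      using AB(1) f(3) g(2) by blast
  qed
  have "f ` V \<subseteq> H_vertices r"
    using f(1) by (simp add: bij_betw_def)
  then have cover_image:
    "\<forall>C. minimal_vertex_cover V E C \<longrightarrow> minimal_vertex_cover (H_vertices r) (H_edges r) (f ` C)"
    using minimal_vertex_cover_image_H[OF fin(1) assms(2) min_A card_A inj _ pairs] by blast
  have "\<forall>C\<in>cover_graph_vertices V E. f ` C \<in> cover_graph_vertices (H_vertices r) (H_edges r)"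
    using cover_image unfolding cover_graph_vertices_def by blast
  moreover have "\<forall>C D. {C, D} \<in> cover_graph_edges V E \<longrightarrow>
      {f ` C, f ` D} \<in> cover_graph_edges (H_vertices r) (H_edges r)"
    using cover_graph_edge_image[OF inj] cover_image by blast
  ultimately show ?thesis
    using f(1) pairs by blast
qed

lemma bipartite_cover_graph_unmixed_bipartite:
  assumes "simple_graph V E" "unmixed V E" "bipartite V E" "no_isolated_vertices V E"
  shows "bipartite (cover_graph_vertices V E) (cover_graph_edges V E)"
proof -
  let ?r = "alpha0 V E"
  obtain f where "\<forall>C D. {C, D} \<in> cover_graph_edges V E \<longrightarrow>
      {f ` C, f ` D} \<in> cover_graph_edges (H_vertices ?r) (H_edges ?r)"
    using unmixed_bipartite_cover_graph_embedding[OF assms refl] by blast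
  moreover have "finite V"
    using assms(1) unfolding simple_graph_def by blast
  ultimately show ?thesis
    by (intro bipartite_if_homomorphism[OF bipartite_cover_graph_H simple_graph_cover_graph])
qed

theorem proposition4p9:
  shows "(\<forall>r::nat. r \<ge> 1 \<longrightarrow>
            bipartite (cover_graph_vertices (H_vertices r) (H_edges r))
                      (cover_graph_edges (H_vertices r) (H_edges r))
          \<and> regular (cover_graph_vertices (H_vertices r) (H_edges r))
                    (cover_graph_edges (H_vertices r) (H_edges r)) r
          \<and> card (cover_graph_vertices (H_vertices r) (H_edges r)) = 2 ^ r
          \<and> card (cover_graph_edges (H_vertices r) (H_edges r)) = r * 2 ^ (r - 1))
   \<and> (\<forall>(V::'a set) E r. simple_graph V E \<and> unmixed V E \<and> bipartite V E
          \<and> no_isolated_vertices V E \<and> r = alpha0 V E \<longrightarrow>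
        (\<exists>f. bij_betw f V (H_vertices r)
           \<and> (\<forall>i. 1 \<le> i \<and> i \<le> r \<longrightarrow>
                 (\<exists>a\<in>V. \<exists>b\<in>V. f a = i \<and> f b = r + i \<and> {a, b} \<in> E))
           \<and> (\<forall>C \<in> cover_graph_vertices V E.
                 f ` C \<in> cover_graph_vertices (H_vertices r) (H_edges r))
           \<and> (\<forall>C D. {C, D} \<in> cover_graph_edges V E \<longrightarrow>
                 {f ` C, f ` D} \<in> cover_graph_edges (H_vertices r) (H_edges r)))
        \<and> bipartite (cover_graph_vertices V E) (cover_graph_edges V E))"
  by (intro allI impI conjI; (elim conjE)?;
      rule bipartite_cover_graph_H regular_cover_graph_H card_cover_graph_vertices_H
        card_cover_graph_edges_H unmixed_bipartite_cover_graph_embedding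
        bipartite_cover_graph_unmixed_bipartite; assumption)

end
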